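(* Let $\mathbb{K}$ be a field and $\mathscr{C}$ the category whose objects are associative $\mathbb{K}$-algebras and whose morphisms $X\to Y$ are $\mathbb{K}$-algebra homomorphisms $\varphi$ such that $\varphi(X)$ is an ideal of $Y$ (this category has pullbacks, computed as in $\mathbf{Set}$). Let $M=\mathbb{Z}_2=\{0,1\}$ under addition modulo $2$ and $X$ a unital nonzero $\mathbb{K}$-algebra. Let $\beta$ be the global action of $M$ on $X\times X$ with $\beta_1(x,y)=(y,x)$, let $\iota\colon X\to X\times X$, $\iota(x)=(x,0)$, and let $\alpha$ be the restriction of $\beta$ to $X$ via $\iota$ (so $\operatorname{dom}\alpha_1=\{0\}$). Then $(\beta,\iota)$ is a universal globalization of $\alpha$, but $\iota$ is not a reflection of $\alpha$ in $\mathrm{Act}_M(\mathscr{C})$; consequently $\alpha$ has no reflection in $\mathrm{Act}_M(\mathscr{C})$.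
   Context: A partial action datum of $M$ on an object $X$ of a category with pullbacks $\mathscr{C}$ assigns to each $m\in M$ an isomorphism class of spans $[\operatorname{dom}\alpha_m,\iota_m,\alpha_m]$ with $\iota_m\colon\operatorname{dom}\alpha_m\to X$ a monomorphism and $\alpha_m\colon\operatorname{dom}\alpha_m\to X$. A global action of $M$ on $Y$ is a family of morphisms $\beta_m\colon Y\to Y$ with $\beta_e=\mathrm{id}_Y$, $\beta_n\circ\beta_m=\beta_{nm}$. A datum morphism from $\alpha$ to a global action $\gamma$ on $Z$ is a morphism $f\colon X\to Z$ with $\gamma_m\circ f\circ\iota_m=f\circ\alpha_m$ for all $m$; between global actions, datum morphisms are the $g$ with $g\circ\beta_m=\gamma_m\circ g$. $\mathrm{Act}_M(\mathscr{C})$ is the category of global actions with these morphisms. Given a global action $\beta$ on $Y$ and a monomorphism $\iota\colon X\to Y$, the restriction of $\beta$ via $\iota$ is the datum $\alpha$ on $X$ such that for each $m$ the square $\beta_m\circ\iota\circ\iota_m=\iota\circ\alpha_m$ is a pullback. A globalization of $\alpha$ is a pair $(\beta,\iota)$ with $\beta$ global on $Y$ and $\iota\colon X\to Y$ a monomorphism such that $\alpha$ is the restriction of $\beta$ via $\iota$; it is universal if for every globalization $(\gamma,\kappa)$ of $\alpha$ there is a unique datum morphism $\kappa'\colon\beta\to\gamma$ with $\kappa'\circ\iota=\kappa$. A reflection of $\alpha$ in $\mathrm{Act}_M(\mathscr{C})$ is a datum morphism $r\colon\alpha\to\beta$ with $\beta$ global such that for every datum morphism $f\colon\alpha\to\gamma$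 with $\gamma$ global there is a unique datum morphism $f'\colon\beta\to\gamma$ with $f'\circ r=f$. *)

theory Defs
  imports Main
begin

record ('k, 'a) kalg =
  acar  :: "'a set"
  aadd  :: "'a \<Rightarrow> 'a \<Rightarrow> 'a"
  amul  :: "'a \<Rightarrow> 'a \<Rightarrow> 'a"
  azero :: "'a"
  aneg  :: "'a \<Rightarrow> 'a"
  asmul :: "'k \<Rightarrow> 'a \<Rightarrow> 'a"

definition kalg :: "('k::field, 'a) kalg \<Rightarrow> bool" where
  "kalg A \<longleftrightarrow>
     azero A \<in> acar A \<and>
     (\<forall>x\<in>acar A. \<forall>y\<in>acar A. aadd A x y \<in> acar A \<and> amul A x y \<in> acar A) \<and>
     (\<forall>x\<in>acar A. aneg A x \<in> acar A) \<and>
     (\<forall>c. \<forall>x\<in>acar A. asmul A c x \<in> acar A) \<and>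
     (\<forall>x\<in>acar A. \<forall>y\<in>acar A. \<forall>z\<in>acar A. aadd A (aadd A x y) z = aadd A x (aadd A y z)) \<and>
     (\<forall>x\<in>acar A. \<forall>y\<in>acar A. aadd A x y = aadd A y x) \<and>
     (\<forall>x\<in>acar A. aadd A (azero A) x = x) \<and>
     (\<forall>x\<in>acar A. aadd A (aneg A x) x = azero A) \<and>
     (\<forall>x\<in>acar A. \<forall>y\<in>acar A. \<forall>z\<in>acar A. amul A (amul A x y) z = amul A x (amul A y z)) \<and>
     (\<forall>x\<in>acar A. \<forall>y\<in>acar A. \<forall>z\<in>acar A.
        amul A x (aadd A y z) = aadd A (amul A x y) (amul A x z) \<and>
        amul A (aadd A x y) z = aadd A (amul A x z) (amul A y z)) \<and>
     (\<forall>c. \<forall>x\<in>acar A. \<forall>y\<in>acar A. asmul A c (aadd A x y) = aadd A (asmul A c x) (asmul A c y)) \<and>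
     (\<forall>c d. \<forall>x\<in>acar A. asmul A (c + d) x = aadd A (asmul A c x) (asmul A d x)) \<and>
     (\<forall>c d. \<forall>x\<in>acar A. asmul A (c * d) x = asmul A c (asmul A d x)) \<and>
     (\<forall>x\<in>acar A. asmul A 1 x = x) \<and>
     (\<forall>c. \<forall>x\<in>acar A. \<forall>y\<in>acar A.
        asmul A c (amul A x y) = amul A (asmul A c x) y \<and>
        asmul A c (amul A x y) = amul A x (asmul A c y))"

definition unital :: "('k, 'a) kalg \<Rightarrow> bool" where
  "unital A \<longleftrightarrow> (\<exists>u\<in>acar A. \<forall>x\<in>acar A. amul A u x = x \<and> amul A x u = x)"

definition nonzero :: "('k, 'a) kalg \<Rightarrow> bool" where
  "nonzero A \<longleftrightarrow> acar A \<noteq> {azero A}"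

definition alg_hom :: "('k, 'a) kalg \<Rightarrow> ('k, 'b) kalg \<Rightarrow> ('a \<Rightarrow> 'b) \<Rightarrow> bool" where
  "alg_hom A B f \<longleftrightarrow>
     (\<forall>x\<in>acar A. f x \<in> acar B) \<and>
     (\<forall>x\<in>acar A. \<forall>y\<in>acar A. f (aadd A x y) = aadd B (f x) (f y)) \<and>
     (\<forall>x\<in>acar A. \<forall>y\<in>acar A. f (amul A x y) = amul B (f x) (f y)) \<and>
     (\<forall>c. \<forall>x\<in>acar A. f (asmul A c x) = asmul B c (f x))"

definition alg_ideal :: "('k, 'b) kalg \<Rightarrow> 'b set \<Rightarrow> bool" where
  "alg_ideal B I \<longleftrightarrow>
     I \<subseteq> acar B \<and> azero B \<in> I \<and>
     (\<forall>x\<in>I. \<forall>y\<in>I. aadd B x y \<in> I) \<and> (\<forall>x\<in>I. aneg B x \<in> I) \<and>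
     (\<forall>c. \<forall>x\<in>I. asmul B c x \<in> I) \<and>
     (\<forall>b\<in>acar B. \<forall>x\<in>I. amul B b x \<in> I \<and> amul B x b \<in> I)"

definition morC :: "('k::field, 'a) kalg \<Rightarrow> ('k, 'b) kalg \<Rightarrow> ('a \<Rightarrow> 'b) \<Rightarrow> bool" where
  "morC A B f \<longleftrightarrow> kalg A \<and> kalg B \<and> alg_hom A B f \<and> alg_ideal B (f ` acar A)"

text \<open>Monomorphisms of C (these are exactly the injective morphisms).\<close>
definition monoC :: "('k::field, 'a) kalg \<Rightarrow> ('k, 'b) kalg \<Rightarrow> ('a \<Rightarrow> 'b) \<Rightarrow> bool" where
  "monoC A B f \<longleftrightarrow> morC A B f \<and> inj_on f (acar A)"

text \<open>Pullback squares in C (pullbacks in C are computed as in Set):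
  the square  f \<circ> p = g \<circ> q  with vertex D is a pullback iff the comparison
  map from D to the set-theoretic pullback is bijective.\<close>
definition pullback_sq ::
  "('k::field, 'd) kalg \<Rightarrow> ('k, 'a) kalg \<Rightarrow> ('k, 'b) kalg \<Rightarrow> ('k, 'c) kalg \<Rightarrow>
   ('d \<Rightarrow> 'a) \<Rightarrow> ('d \<Rightarrow> 'b) \<Rightarrow> ('a \<Rightarrow> 'c) \<Rightarrow> ('b \<Rightarrow> 'c) \<Rightarrow> bool" where
  "pullback_sq D A B C p q f g \<longleftrightarrow>
     morC D A p \<and> morC D B q \<and> morC A C f \<and> morC B C g \<and>
     (\<forall>d\<in>acar D. f (p d) = g (q d)) \<and>
     bij_betw (\<lambda>d. (p d, q d)) (acar D) {(a, b). a \<in> acar A \<and> b \<in> acar B \<and> f a = g b}"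

definition prod_alg :: "('k, 'a) kalg \<Rightarrow> ('k, 'a \<times> 'a) kalg" where
  "prod_alg A =
     \<lparr> acar = acar A \<times> acar A,
       aadd = (\<lambda>(a, b) (c, d). (aadd A a c, aadd A b d)),
       amul = (\<lambda>(a, b) (c, d). (amul A a c, amul A b d)),
       azero = (azero A, azero A),
       aneg = (\<lambda>(a, b). (aneg A a, aneg A b)),
       asmul = (\<lambda>k (a, b). (asmul A k a, asmul A k b)) \<rparr>"

text \<open>A partial action datum: for each m a representative span
  (dom alpha_m, iota_m, alpha_m).\<close>
type_synonym ('k, 'd, 'x, 'm) datum = "'m \<Rightarrow> ('k, 'd) kalg \<times> ('d \<Rightarrow> 'x) \<times> ('d \<Rightarrow> 'x)"

definition ddom :: "('k, 'd, 'x, 'm) datum \<Rightarrow> 'm \<Rightarrow> ('k, 'd) kalg" where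
  "ddom \<alpha> m = fst (\<alpha> m)"
definition dinc :: "('k, 'd, 'x, 'm) datum \<Rightarrow> 'm \<Rightarrow> 'd \<Rightarrow> 'x" where
  "dinc \<alpha> m = fst (snd (\<alpha> m))"
definition dmap :: "('k, 'd, 'x, 'm) datum \<Rightarrow> 'm \<Rightarrow> 'd \<Rightarrow> 'x" where
  "dmap \<alpha> m = snd (snd (\<alpha> m))"

definition partial_datum :: "('k::field, 'd, 'x, 'm) datum \<Rightarrow> ('k, 'x) kalg \<Rightarrow> bool" where
  "partial_datum \<alpha> X \<longleftrightarrow>
     (\<forall>m. monoC (ddom \<alpha> m) X (dinc \<alpha> m) \<and> morC (ddom \<alpha> m) X (dmap \<alpha> m))"

definition global_action ::
  "('m \<Rightarrow> 'm \<Rightarrow> 'm) \<Rightarrow> 'm \<Rightarrow> ('k::field, 'y) kalg \<Rightarrow> ('m \<Rightarrow> 'y \<Rightarrow> 'y) \<Rightarrow> bool" where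
  "global_action Mop Me Y \<beta> \<longleftrightarrow>
     (\<forall>m. morC Y Y (\<beta> m)) \<and>
     (\<forall>y\<in>acar Y. \<beta> Me y = y) \<and>
     (\<forall>m n. \<forall>y\<in>acar Y. \<beta> n (\<beta> m y) = \<beta> (Mop n m) y)"

definition datum_mor ::
  "('k::field, 'd, 'x, 'm) datum \<Rightarrow> ('k, 'x) kalg \<Rightarrow> ('k, 'z) kalg \<Rightarrow> ('m \<Rightarrow> 'z \<Rightarrow> 'z)
   \<Rightarrow> ('x \<Rightarrow> 'z) \<Rightarrow> bool" where
  "datum_mor \<alpha> X Z \<gamma> f \<longleftrightarrow>
     morC X Z f \<and>
     (\<forall>m. \<forall>d\<in>acar (ddom \<alpha> m). \<gamma> m (f (dinc \<alpha> m d)) = f (dmap \<alpha> m d))"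

definition global_mor ::
  "('k::field, 'y) kalg \<Rightarrow> ('m \<Rightarrow> 'y \<Rightarrow> 'y) \<Rightarrow> ('k, 'z) kalg \<Rightarrow> ('m \<Rightarrow> 'z \<Rightarrow> 'z)
   \<Rightarrow> ('y \<Rightarrow> 'z) \<Rightarrow> bool" where
  "global_mor Y \<beta> Z \<gamma> g \<longleftrightarrow>
     morC Y Z g \<and> (\<forall>m. \<forall>y\<in>acar Y. g (\<beta> m y) = \<gamma> m (g y))"

definition is_restriction ::
  "('k::field, 'd, 'x, 'm) datum \<Rightarrow> ('k, 'x) kalg \<Rightarrow> ('k, 'y) kalg \<Rightarrow> ('m \<Rightarrow> 'y \<Rightarrow> 'y)
   \<Rightarrow> ('x \<Rightarrow> 'y) \<Rightarrow> bool" where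
  "is_restriction \<alpha> X Y \<beta> \<iota> \<longleftrightarrow>
     partial_datum \<alpha> X \<and> monoC X Y \<iota> \<and>
     (\<forall>m. pullback_sq (ddom \<alpha> m) X X Y (dinc \<alpha> m) (dmap \<alpha> m) (\<beta> m \<circ> \<iota>) \<iota>)"

definition globalization ::
  "('m \<Rightarrow> 'm \<Rightarrow> 'm) \<Rightarrow> 'm \<Rightarrow> ('k::field, 'd, 'x, 'm) datum \<Rightarrow> ('k, 'x) kalg \<Rightarrow>
   ('k, 'y) kalg \<Rightarrow> ('m \<Rightarrow> 'y \<Rightarrow> 'y) \<Rightarrow> ('x \<Rightarrow> 'y) \<Rightarrow> bool" where
  "globalization Mop Me \<alpha> X Y \<beta> \<iota> \<longleftrightarrow>
     global_action Mop Me Y \<beta> \<and> monoC X Y \<iota> \<and> is_restriction \<alpha> X Y \<beta> \<iota>"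

text \<open>Universal globalization; the competing globalizations range over objects whose
  carriers live in the type 'z (in the theorem 'z is an arbitrary type variable).\<close>
definition universal_globalization ::
  "'z itself \<Rightarrow> ('m \<Rightarrow> 'm \<Rightarrow> 'm) \<Rightarrow> 'm \<Rightarrow> ('k::field, 'd, 'x, 'm) datum \<Rightarrow> ('k, 'x) kalg \<Rightarrow>
   ('k, 'y) kalg \<Rightarrow> ('m \<Rightarrow> 'y \<Rightarrow> 'y) \<Rightarrow> ('x \<Rightarrow> 'y) \<Rightarrow> bool" where
  "universal_globalization (T :: 'z itself) Mop Me \<alpha> X Y \<beta> \<iota> \<longleftrightarrow>
     globalization Mop Me \<alpha> X Y \<beta> \<iota> \<and>
     (\<forall>(Z :: ('k, 'z) kalg) \<gamma> \<kappa>. globalization Mop Me \<alpha> X Z \<gamma> \<kappa> \<longrightarrow>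
        (\<exists>\<kappa>'. global_mor Y \<beta> Z \<gamma> \<kappa>' \<and> (\<forall>x\<in>acar X. \<kappa>' (\<iota> x) = \<kappa> x) \<and>
           (\<forall>\<kappa>''. global_mor Y \<beta> Z \<gamma> \<kappa>'' \<and> (\<forall>x\<in>acar X. \<kappa>'' (\<iota> x) = \<kappa> x) \<longrightarrow>
                 (\<forall>y\<in>acar Y. \<kappa>'' y = \<kappa>' y))))"

text \<open>Reflection of alpha in Act_M(C); the test global actions range over objects whose
  carriers live in the type 'c.\<close>
definition is_reflection ::
  "'c itself \<Rightarrow> ('m \<Rightarrow> 'm \<Rightarrow> 'm) \<Rightarrow> 'm \<Rightarrow> ('k::field, 'd, 'x, 'm) datum \<Rightarrow> ('k, 'x) kalg \<Rightarrow>
   ('k, 'y) kalg \<Rightarrow> ('m \<Rightarrow> 'y \<Rightarrow> 'y) \<Rightarrow> ('x \<Rightarrow> 'y) \<Rightarrow> bool" where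
  "is_reflection (T :: 'c itself) Mop Me \<alpha> X Y \<beta> r \<longleftrightarrow>
     global_action Mop Me Y \<beta> \<and> datum_mor \<alpha> X Y \<beta> r \<and>
     (\<forall>(Z :: ('k, 'c) kalg) \<gamma> f. global_action Mop Me Z \<gamma> \<and> datum_mor \<alpha> X Z \<gamma> f \<longrightarrow>
        (\<exists>f'. global_mor Y \<beta> Z \<gamma> f' \<and> (\<forall>x\<in>acar X. f' (r x) = f x) \<and>
           (\<forall>f''. global_mor Y \<beta> Z \<gamma> f'' \<and> (\<forall>x\<in>acar X. f'' (r x) = f x) \<longrightarrow>
                 (\<forall>y\<in>acar Y. f'' y = f' y))))"

datatype z2 = Z0 | Z1

fun z2_add :: "z2 \<Rightarrow> z2 \<Rightarrow> z2" where
  "z2_add Z0 n = n"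
| "z2_add Z1 Z0 = Z1"
| "z2_add Z1 Z1 = Z0"

fun swap_act :: "z2 \<Rightarrow> 'a \<times> 'a \<Rightarrow> 'a \<times> 'a" where
  "swap_act Z0 p = p"
| "swap_act Z1 (a, b) = (b, a)"

end

(* For a globalization (gamma, kappa) of alpha on Z, the pullback squares say that
   gamma_1 (kappa a) = kappa b only for a = b = 0, exactly as for the swap on X x X; so the ideal
   I = kappa X meets its image gamma_1 I only in 0. Since I and gamma_1 I are both absorbing,
   their products lie in that intersection and vanish, which makes
   (a, b) |-> kappa a + gamma_1 (kappa b) an equivariant algebra morphism X x X -> Z whose image
   is an ideal; it is the only one extending kappa, as (a, b) = (a, 0) + swap (b, 0).
   A reflection r of alpha into an action beta on Y would factor through the swap action on
   X x X, which again forces r X and beta_1 (r X) to meet only in 0, so r x * beta_1 (r u) = 0.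
   Factoring r through the trivial action on X x X instead, that product is sent to
   (x * u, 0) = (x, 0), which is nonzero for u the unit and x <> 0. *)

theory Submission
  imports Defs
begin

locale kalgebra =
  fixes A :: "('k::field, 'a) kalg"
  assumes kalg: "kalg A"
begin

lemma zero_closed: "azero A \<in> acar A"
  and add_closed: "x \<in> acar A \<Longrightarrow> y \<in> acar A \<Longrightarrow> aadd A x y \<in> acar A"
  and mul_closed: "x \<in> acar A \<Longrightarrow> y \<in> acar A \<Longrightarrow> amul A x y \<in> acar A"
  and neg_closed: "x \<in> acar A \<Longrightarrow> aneg A x \<in> acar A"
  and smult_closed: "x \<in> acar A \<Longrightarrow> asmul A c x \<in> acar A"
  and add_assoc: "x \<in> acar A \<Longrightarrow> y \<in> acar A \<Longrightarrow> z \<in> acar A \<Longrightarrow>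
    aadd A (aadd A x y) z = aadd A x (aadd A y z)"
  and add_commute: "x \<in> acar A \<Longrightarrow> y \<in> acar A \<Longrightarrow> aadd A x y = aadd A y x"
  and zero_add: "x \<in> acar A \<Longrightarrow> aadd A (azero A) x = x"
  and neg_add: "x \<in> acar A \<Longrightarrow> aadd A (aneg A x) x = azero A"
  and mul_assoc: "x \<in> acar A \<Longrightarrow> y \<in> acar A \<Longrightarrow> z \<in> acar A \<Longrightarrow>
    amul A (amul A x y) z = amul A x (amul A y z)"
  and distrib_left: "x \<in> acar A \<Longrightarrow> y \<in> acar A \<Longrightarrow> z \<in> acar A \<Longrightarrow>
    amul A x (aadd A y z) = aadd A (amul A x y) (amul A x z)"
  and distrib_right: "x \<in> acar A \<Longrightarrow> y \<in> acar A \<Longrightarrow> z \<in> acar A \<Longrightarrow>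
    amul A (aadd A x y) z = aadd A (amul A x z) (amul A y z)"
  and smult_add_right: "x \<in> acar A \<Longrightarrow> y \<in> acar A \<Longrightarrow>
    asmul A c (aadd A x y) = aadd A (asmul A c x) (asmul A c y)"
  and smult_add_left: "x \<in> acar A \<Longrightarrow> asmul A (c + d) x = aadd A (asmul A c x) (asmul A d x)"
  and smult_smult: "x \<in> acar A \<Longrightarrow> asmul A (c * d) x = asmul A c (asmul A d x)"
  and smult_one: "x \<in> acar A \<Longrightarrow> asmul A 1 x = x"
  and smult_mul_left: "x \<in> acar A \<Longrightarrow> y \<in> acar A \<Longrightarrow>
    asmul A c (amul A x y) = amul A (asmul A c x) y"
  and smult_mul_right: "x \<in> acar A \<Longrightarrow> y \<in> acar A \<Longrightarrow>
    asmul A c (amul A x y) = amul A x (asmul A c y)"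
  by (insert kalg, unfold kalg_def, elim conjE, meson)+

lemma add_zero: "x \<in> acar A \<Longrightarrow> aadd A x (azero A) = x"
  using add_commute zero_add zero_closed by metis

lemma add_idem_imp_zero:
  assumes "x \<in> acar A" and "aadd A x x = x"
  shows "x = azero A"
proof -
  have "x = aadd A (aadd A (aneg A x) x) x"
    using assms(1) by (simp add: neg_add zero_add)
  also have "\<dots> = aadd A (aneg A x) (aadd A x x)"
    using assms(1) by (simp add: add_assoc neg_closed)
  also have "\<dots> = azero A"
    using assms by (simp add: neg_add)
  finally show ?thesis .
qed

lemma mul_zero: "x \<in> acar A \<Longrightarrow> amul A x (azero A) = azero A"
  by (rule add_idem_imp_zero) (auto simp: mul_closed zero_closed distrib_left[symmetric] zero_add)

lemma zero_mul: "x \<in> acar A \<Longrightarrow> amul A (azero A) x = azero A"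
  by (rule add_idem_imp_zero) (auto simp: mul_closed zero_closed distrib_right[symmetric] zero_add)

lemma smult_zero: "asmul A c (azero A) = azero A"
  by (rule add_idem_imp_zero) (auto simp: smult_closed zero_closed smult_add_right[symmetric] zero_add)

lemma neg_unique:
  assumes "x \<in> acar A" and "y \<in> acar A" and "aadd A y x = azero A"
  shows "y = aneg A x"
proof -
  have "y = aadd A (aadd A (aneg A x) x) y"
    using assms by (simp add: neg_add zero_add)
  also have "\<dots> = aadd A (aneg A x) (aadd A x y)"
    using assms by (simp add: add_assoc neg_closed)
  also have "\<dots> = aneg A x"
    using assms add_commute[of x y] by (simp add: add_zero neg_closed)
  finally show ?thesis .
qed

lemma neg_zero: "aneg A (azero A) = azero A"
  using neg_unique zero_add zero_closed by metis

lemma add_add_add_commute: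
  assumes "w \<in> acar A" "x \<in> acar A" "y \<in> acar A" "z \<in> acar A"
  shows "aadd A (aadd A w x) (aadd A y z) = aadd A (aadd A w y) (aadd A x z)"
proof -
  have "aadd A (aadd A w x) (aadd A y z) = aadd A w (aadd A (aadd A x y) z)"
    using assms by (simp add: add_assoc add_closed)
  also have "\<dots> = aadd A w (aadd A (aadd A y x) z)"
    using assms by (simp add: add_commute)
  also have "\<dots> = aadd A (aadd A w y) (aadd A x z)"
    using assms by (simp add: add_assoc add_closed)
  finally show ?thesis .
qed

end

lemma alg_hom_closed: "alg_hom A B f \<Longrightarrow> x \<in> acar A \<Longrightarrow> f x \<in> acar B"
  and alg_hom_add: "alg_hom A B f \<Longrightarrow> x \<in> acar A \<Longrightarrow> y \<in> acar A \<Longrightarrow>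
    f (aadd A x y) = aadd B (f x) (f y)"
  and alg_hom_mul: "alg_hom A B f \<Longrightarrow> x \<in> acar A \<Longrightarrow> y \<in> acar A \<Longrightarrow>
    f (amul A x y) = amul B (f x) (f y)"
  and alg_hom_smult: "alg_hom A B f \<Longrightarrow> x \<in> acar A \<Longrightarrow> f (asmul A c x) = asmul B c (f x)"
  unfolding alg_hom_def by blast+

lemma alg_hom_zero:
  assumes "kalg A" and "kalg B" and "alg_hom A B f"
  shows "f (azero A) = azero B"
proof -
  interpret A: kalgebra A by (rule kalgebra.intro) fact
  interpret B: kalgebra B by (rule kalgebra.intro) fact
  have "aadd B (f (azero A)) (f (azero A)) = f (azero A)"
    using assms(3) by (simp add: alg_hom_add[symmetric] A.zero_closed A.zero_add)
  then show ?thesis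
    using assms(3) by (simp add: B.add_idem_imp_zero alg_hom_closed A.zero_closed)
qed

lemma alg_hom_neg:
  assumes "kalg A" and "kalg B" and "alg_hom A B f" and "x \<in> acar A"
  shows "f (aneg A x) = aneg B (f x)"
proof -
  interpret A: kalgebra A by (rule kalgebra.intro) fact
  interpret B: kalgebra B by (rule kalgebra.intro) fact
  have "aadd B (f (aneg A x)) (f x) = azero B"
    using assms by (simp add: alg_hom_add[symmetric] A.neg_closed A.neg_add alg_hom_zero)
  then show ?thesis
    using assms by (simp add: B.neg_unique alg_hom_closed A.neg_closed)
qed

lemma alg_ideal_mul_closed:
  "alg_ideal B I \<Longrightarrow> b \<in> acar B \<Longrightarrow> x \<in> I \<Longrightarrow> amul B b x \<in> I \<and> amul B x b \<in> I"
  unfolding alg_ideal_def by blast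

lemma alg_ideal_carrier:
  assumes "kalg A"
  shows "alg_ideal A (acar A)"
proof -
  interpret kalgebra A by (rule kalgebra.intro) fact
  show ?thesis
    unfolding alg_ideal_def by (simp add: zero_closed add_closed neg_closed smult_closed mul_closed)
qed

lemma alg_ideal_hom_imageI:
  assumes "kalg A" and "kalg B" and f: "alg_hom A B f"
    and absorb: "\<And>b x. b \<in> acar B \<Longrightarrow> x \<in> acar A \<Longrightarrow>
      amul B b (f x) \<in> f ` acar A \<and> amul B (f x) b \<in> f ` acar A"
  shows "alg_ideal B (f ` acar A)"
proof -
  interpret A: kalgebra A by (rule kalgebra.intro) fact
  have zero: "azero B \<in> f ` acar A"
    using alg_hom_zero[OF assms(1-3)] A.zero_closed by (metis imageI)
  have add: "aadd B (f x) (f y) \<in> f ` acar A" if "x \<in> acar A" "y \<in> acar A" for x y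
    using alg_hom_add[OF f that] A.add_closed[OF that] by (metis imageI)
  have neg: "aneg B (f x) \<in> f ` acar A" if "x \<in> acar A" for x
    using alg_hom_neg[OF assms(1-3) that] A.neg_closed[OF that] by (metis imageI)
  have smult: "asmul B c (f x) \<in> f ` acar A" if "x \<in> acar A" for c x
    using alg_hom_smult[OF f that] A.smult_closed[OF that] by (metis imageI)
  show ?thesis
    unfolding alg_ideal_def
    using alg_hom_closed[OF f] zero add neg smult absorb by auto
qed

lemma morC_id: "kalg A \<Longrightarrow> morC A A id"
  unfolding morC_def alg_hom_def by (simp add: alg_ideal_carrier)

lemma global_action_trivial: "kalg Y \<Longrightarrow> global_action Mop Me Y (\<lambda>m. id)"
  unfolding global_action_def by (simp add: morC_id)

lemma global_action_Z1_involution: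
  "global_action z2_add Z0 Y \<beta> \<Longrightarrow> y \<in> acar Y \<Longrightarrow> \<beta> Z1 (\<beta> Z1 y) = y"
  unfolding global_action_def by (metis z2_add.simps(3))

lemma prod_alg_simps [simp]:
  "acar (prod_alg A) = acar A \<times> acar A"
  "aadd (prod_alg A) (a, b) (c, d) = (aadd A a c, aadd A b d)"
  "amul (prod_alg A) (a, b) (c, d) = (amul A a c, amul A b d)"
  "azero (prod_alg A) = (azero A, azero A)"
  "aneg (prod_alg A) (a, b) = (aneg A a, aneg A b)"
  "asmul (prod_alg A) k (a, b) = (asmul A k a, asmul A k b)"
  by (simp_all add: prod_alg_def)

lemma kalg_prod_alg:
  assumes "kalg A"
  shows "kalg (prod_alg A)"
proof -
  interpret kalgebra A by (rule kalgebra.intro) fact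
  show ?thesis
    unfolding kalg_def
    by (intro conjI ballI allI; clarsimp simp: zero_closed add_closed mul_closed neg_closed
        smult_closed add_assoc zero_add neg_add mul_assoc distrib_left distrib_right
        smult_add_right smult_add_left smult_smult smult_one smult_mul_left
        smult_mul_right[symmetric]; metis add_commute)
qed

lemma morC_swap_act:
  fixes A :: "('k::field, 'a) kalg"
  assumes "kalg A"
  shows "morC (prod_alg A) (prod_alg A) (swap_act m)"
proof (cases m)
  case Z0
  then have "swap_act m = (id :: 'a \<times> 'a \<Rightarrow> _)"
    by auto
  then show ?thesis
    using assms by (simp add: morC_id kalg_prod_alg)
next
  case Z1
  have "swap_act Z1 ` (acar A \<times> acar A) = acar A \<times> acar A"
    by (auto simp: image_iff)
  moreover have "alg_hom (prod_alg A) (prod_alg A) (swap_act Z1)"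
    unfolding alg_hom_def by auto
  ultimately show ?thesis
    using Z1 assms alg_ideal_carrier[OF kalg_prod_alg[OF assms]]
    by (simp add: morC_def kalg_prod_alg)
qed

lemma global_action_swap_act:
  fixes A :: "('k::field, 'a) kalg"
  assumes "kalg A"
  shows "global_action z2_add Z0 (prod_alg A) swap_act"
proof -
  have "swap_act n (swap_act m p) = swap_act (z2_add n m) p" for n m and p :: "'a \<times> 'a"
    by (cases n; cases m; cases p) auto
  then show ?thesis
    using assms by (simp add: global_action_def morC_swap_act)
qed

lemma monoC_inl:
  assumes "kalg A"
  shows "monoC A (prod_alg A) (\<lambda>x. (x, azero A))"
proof -
  interpret kalgebra A by (rule kalgebra.intro) fact
  have "alg_hom A (prod_alg A) (\<lambda>x. (x, azero A))"
    unfolding alg_hom_def by (simp add: zero_closed zero_add zero_mul smult_zero)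
  moreover have "alg_ideal (prod_alg A) ((\<lambda>x. (x, azero A)) ` acar A)"
    unfolding alg_ideal_def
    by (auto simp: zero_closed add_closed mul_closed neg_closed smult_closed zero_add zero_mul
        mul_zero smult_zero neg_zero)
  ultimately show ?thesis
    using assms by (simp add: monoC_def morC_def kalg_prod_alg inj_on_def)
qed

lemma swap_act_eq_imp_eq: "swap_act m (a, z) = (b, z) \<Longrightarrow> a = b"
  by (cases m) auto

lemma is_restriction_commutes:
  "is_restriction \<alpha> X Y \<beta> \<iota> \<Longrightarrow> d \<in> acar (ddom \<alpha> m) \<Longrightarrow>
    \<beta> m (\<iota> (dinc \<alpha> m d)) = \<iota> (dmap \<alpha> m d)"
  unfolding is_restriction_def pullback_sq_def by simp

lemma is_restriction_datum_mor: "is_restriction \<alpha> X Y \<beta> \<iota> \<Longrightarrow> datum_mor \<alpha> X Y \<beta> \<iota>"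
  unfolding datum_mor_def
  by (auto simp: is_restriction_commutes) (simp add: is_restriction_def monoC_def)

text \<open>By the pullback condition, \<open>dom \<alpha>\<^sub>m\<close> parametrises exactly the pairs \<open>(a, b)\<close> with
  \<open>\<beta>\<^sub>m (\<iota> a) = \<iota> b\<close>, so this relation on \<open>X\<close> is the same for every globalization of \<open>\<alpha>\<close>.\<close>
lemma is_restriction_graph:
  assumes "is_restriction \<alpha> X Y \<beta> \<iota>"
  shows "{(a, b). a \<in> acar X \<and> b \<in> acar X \<and> \<beta> m (\<iota> a) = \<iota> b} =
    (\<lambda>d. (dinc \<alpha> m d, dmap \<alpha> m d)) ` acar (ddom \<alpha> m)"
  using assms unfolding is_restriction_def pullback_sq_def bij_betw_def by auto

lemma datum_mor_trivial_inl:
  assumes "kalg X" and R: "is_restriction \<alpha> X (prod_alg X) swap_act (\<lambda>x. (x, azero X))"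
  shows "datum_mor \<alpha> X (prod_alg X) (\<lambda>m. id) (\<lambda>x. (x, azero X))"
proof -
  have "dinc \<alpha> m d = dmap \<alpha> m d" if "d \<in> acar (ddom \<alpha> m)" for m d
    using is_restriction_commutes[OF R that] by (rule swap_act_eq_imp_eq)
  then show ?thesis
    using monoC_inl[OF assms(1)] unfolding datum_mor_def monoC_def by simp
qed

lemma involution_image_mul_closed:
  assumes I: "alg_ideal Z I" and \<sigma>: "alg_hom Z Z \<sigma>"
    and invol: "\<And>z. z \<in> acar Z \<Longrightarrow> \<sigma> (\<sigma> z) = z"
    and "z \<in> acar Z" and "y \<in> I"
  shows "amul Z z (\<sigma> y) \<in> \<sigma> ` I \<and> amul Z (\<sigma> y) z \<in> \<sigma> ` I"
proof -
  have y: "y \<in> acar Z" and \<sigma>z: "\<sigma> z \<in> acar Z"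
    using assms alg_hom_closed[OF \<sigma>] unfolding alg_ideal_def by auto
  have "amul Z z (\<sigma> y) = \<sigma> (amul Z (\<sigma> z) y)" and "amul Z (\<sigma> y) z = \<sigma> (amul Z y (\<sigma> z))"
    using alg_hom_mul[OF \<sigma>] y \<sigma>z invol \<open>z \<in> acar Z\<close> by simp_all
  moreover have "amul Z (\<sigma> z) y \<in> I" and "amul Z y (\<sigma> z) \<in> I"
    using alg_ideal_mul_closed[OF I \<sigma>z \<open>y \<in> I\<close>] by simp_all
  ultimately show ?thesis
    by auto
qed

lemma mul_involution_image_eq_zero:
  assumes I: "alg_ideal Z I" and \<sigma>: "alg_hom Z Z \<sigma>"
    and invol: "\<And>z. z \<in> acar Z \<Longrightarrow> \<sigma> (\<sigma> z) = z"
    and disjoint: "I \<inter> \<sigma> ` I \<subseteq> {azero Z}"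
    and "x \<in> I" and "y \<in> I"
  shows "amul Z x (\<sigma> y) = azero Z \<and> amul Z (\<sigma> y) x = azero Z"
proof -
  have "x \<in> acar Z" and "\<sigma> y \<in> acar Z"
    using assms alg_hom_closed[OF \<sigma>] unfolding alg_ideal_def by auto
  then have "amul Z x (\<sigma> y) \<in> I \<and> amul Z (\<sigma> y) x \<in> I"
    using alg_ideal_mul_closed[OF I] \<open>x \<in> I\<close> by blast
  moreover have "amul Z x (\<sigma> y) \<in> \<sigma> ` I \<and> amul Z (\<sigma> y) x \<in> \<sigma> ` I"
    using involution_image_mul_closed[OF I \<sigma> invol \<open>x \<in> acar Z\<close> \<open>y \<in> I\<close>] by blast
  ultimately show ?thesis
    using disjoint by blast
qed

locale swap_extension =
  fixes X :: "('k::field, 'x) kalg" and Z :: "('k, 'z) kalg"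
    and \<gamma> :: "z2 \<Rightarrow> 'z \<Rightarrow> 'z" and \<kappa> :: "'x \<Rightarrow> 'z"
  assumes kalg_X: "kalg X"
    and action: "global_action z2_add Z0 Z \<gamma>"
    and mor: "morC X Z \<kappa>"
    and disjoint: "\<kappa> ` acar X \<inter> \<gamma> Z1 ` \<kappa> ` acar X \<subseteq> {azero Z}"
begin

sublocale X: kalgebra X
  by (rule kalgebra.intro) (rule kalg_X)

sublocale Z: kalgebra Z
  using mor by (simp add: kalgebra_def morC_def)

lemma \<kappa>_hom: "alg_hom X Z \<kappa>"
  and \<kappa>_ideal: "alg_ideal Z (\<kappa> ` acar X)"
  using mor by (simp_all add: morC_def)

lemma \<gamma>_hom: "alg_hom Z Z (\<gamma> Z1)"
  using action by (simp add: global_action_def morC_def)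

lemma \<gamma>_involution: "z \<in> acar Z \<Longrightarrow> \<gamma> Z1 (\<gamma> Z1 z) = z"
  using action by (rule global_action_Z1_involution)

lemma \<kappa>_closed [simp]: "x \<in> acar X \<Longrightarrow> \<kappa> x \<in> acar Z"
  using \<kappa>_hom by (rule alg_hom_closed)

lemma \<gamma>_closed [simp]: "z \<in> acar Z \<Longrightarrow> \<gamma> Z1 z \<in> acar Z"
  using \<gamma>_hom by (rule alg_hom_closed)

lemma \<kappa>_zero [simp]: "\<kappa> (azero X) = azero Z"
  using alg_hom_zero[OF kalg_X Z.kalg \<kappa>_hom] .

lemma \<gamma>_zero [simp]: "\<gamma> Z1 (azero Z) = azero Z"
  using alg_hom_zero[OF Z.kalg Z.kalg \<gamma>_hom] .

lemma mul_twisted_eq_zero: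
  assumes "a \<in> acar X" and "b \<in> acar X"
  shows "amul Z (\<kappa> a) (\<gamma> Z1 (\<kappa> b)) = azero Z" and "amul Z (\<gamma> Z1 (\<kappa> b)) (\<kappa> a) = azero Z"
  using mul_involution_image_eq_zero[OF \<kappa>_ideal \<gamma>_hom \<gamma>_involution disjoint] assms by auto

definition twisted_sum :: "'x \<times> 'x \<Rightarrow> 'z" where
  "twisted_sum p = aadd Z (\<kappa> (fst p)) (\<gamma> Z1 (\<kappa> (snd p)))"

lemma twisted_sum_closed: "p \<in> acar X \<times> acar X \<Longrightarrow> twisted_sum p \<in> acar Z"
  unfolding twisted_sum_def by (auto intro: Z.add_closed)

lemma twisted_sum_inl: "x \<in> acar X \<Longrightarrow> twisted_sum (x, azero X) = \<kappa> x"
  unfolding twisted_sum_def by (simp add: Z.add_zero)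

lemma twisted_sum_add:
  assumes "a \<in> acar X" "b \<in> acar X" "c \<in> acar X" "d \<in> acar X"
  shows "twisted_sum (aadd X a c, aadd X b d) = aadd Z (twisted_sum (a, b)) (twisted_sum (c, d))"
  using assms unfolding twisted_sum_def
  by (simp add: alg_hom_add[OF \<kappa>_hom] alg_hom_add[OF \<gamma>_hom] Z.add_add_add_commute)

lemma twisted_sum_mul:
  assumes "a \<in> acar X" "b \<in> acar X" "c \<in> acar X" "d \<in> acar X"
  shows "twisted_sum (amul X a c, amul X b d) = amul Z (twisted_sum (a, b)) (twisted_sum (c, d))"
proof -
  let ?a = "\<kappa> a" and ?b = "\<gamma> Z1 (\<kappa> b)" and ?c = "\<kappa> c" and ?d = "\<gamma> Z1 (\<kappa> d)"
  have "amul Z (twisted_sum (a, b)) (twisted_sum (c, d)) =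
      aadd Z (aadd Z (amul Z ?a ?c) (amul Z ?b ?c)) (aadd Z (amul Z ?a ?d) (amul Z ?b ?d))"
    using assms unfolding twisted_sum_def
    by (simp add: Z.distrib_left Z.distrib_right Z.add_closed)
  also have "\<dots> = aadd Z (amul Z ?a ?c) (amul Z ?b ?d)"
    using assms by (simp add: mul_twisted_eq_zero Z.mul_closed Z.add_zero Z.zero_add)
  also have "\<dots> = twisted_sum (amul X a c, amul X b d)"
    using assms unfolding twisted_sum_def
    by (simp add: alg_hom_mul[OF \<kappa>_hom] alg_hom_mul[OF \<gamma>_hom])
  finally show ?thesis ..
qed

lemma twisted_sum_smult:
  assumes "a \<in> acar X" "b \<in> acar X"
  shows "twisted_sum (asmul X c a, asmul X c b) = asmul Z c (twisted_sum (a, b))"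
  using assms unfolding twisted_sum_def
  by (simp add: alg_hom_smult[OF \<kappa>_hom] alg_hom_smult[OF \<gamma>_hom] Z.smult_add_right)

lemma twisted_sum_alg_hom: "alg_hom (prod_alg X) Z twisted_sum"
  unfolding alg_hom_def
  by (auto simp: twisted_sum_closed twisted_sum_add twisted_sum_mul twisted_sum_smult)

lemma twisted_sum_image_ideal: "alg_ideal Z (twisted_sum ` acar (prod_alg X))"
proof (rule alg_ideal_hom_imageI[OF kalg_prod_alg[OF kalg_X] Z.kalg twisted_sum_alg_hom])
  fix z p
  assume z: "z \<in> acar Z" and "p \<in> acar (prod_alg X)"
  then obtain a b where p: "p = (a, b)" and ab: "a \<in> acar X" "b \<in> acar X"
    by auto
  obtain a1 a2 where a12: "a1 \<in> acar X" "a2 \<in> acar X"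
    "amul Z z (\<kappa> a) = \<kappa> a1" "amul Z (\<kappa> a) z = \<kappa> a2"
    using alg_ideal_mul_closed[OF \<kappa>_ideal z, of "\<kappa> a"] ab by blast
  obtain b1 b2 where b12: "b1 \<in> acar X" "b2 \<in> acar X"
    "amul Z z (\<gamma> Z1 (\<kappa> b)) = \<gamma> Z1 (\<kappa> b1)" "amul Z (\<gamma> Z1 (\<kappa> b)) z = \<gamma> Z1 (\<kappa> b2)"
    using involution_image_mul_closed[OF \<kappa>_ideal \<gamma>_hom \<gamma>_involution z, of "\<kappa> b"] ab by blast
  have "amul Z z (twisted_sum p) = twisted_sum (a1, b1)"
    using z p ab b12 a12 unfolding twisted_sum_def by (simp add: Z.distrib_left)
  moreover have "amul Z (twisted_sum p) z = twisted_sum (a2, b2)"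
    using z p ab b12 a12 unfolding twisted_sum_def by (simp add: Z.distrib_right)
  ultimately show "amul Z z (twisted_sum p) \<in> twisted_sum ` acar (prod_alg X) \<and>
      amul Z (twisted_sum p) z \<in> twisted_sum ` acar (prod_alg X)"
    using a12 b12 by auto
qed

lemma twisted_sum_swap_act:
  assumes "p \<in> acar X \<times> acar X"
  shows "twisted_sum (swap_act m p) = \<gamma> m (twisted_sum p)"
proof (cases m)
  case Z0
  then show ?thesis
    using action twisted_sum_closed[OF assms] by (simp add: global_action_def)
next
  case Z1
  obtain a b where "p = (a, b)" "a \<in> acar X" "b \<in> acar X"
    using assms by auto
  then show ?thesis
    using Z1 unfolding twisted_sum_def
    by (simp add: alg_hom_add[OF \<gamma>_hom] \<gamma>_involution Z.add_commute)
qed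

lemma twisted_sum_global_mor: "global_mor (prod_alg X) swap_act Z \<gamma> twisted_sum"
  unfolding global_mor_def morC_def
  using kalg_prod_alg[OF kalg_X] Z.kalg twisted_sum_alg_hom twisted_sum_image_ideal
    twisted_sum_swap_act by simp

lemma global_mor_eq_twisted_sum:
  assumes h: "global_mor (prod_alg X) swap_act Z \<gamma> h"
    and h_inl: "\<forall>x\<in>acar X. h (x, azero X) = \<kappa> x"
    and "p \<in> acar X \<times> acar X"
  shows "h p = twisted_sum p"
proof -
  obtain a b where p: "p = (a, b)" and ab: "a \<in> acar X" "b \<in> acar X"
    using assms(3) by auto
  have hom: "alg_hom (prod_alg X) Z h"
    using h by (simp add: global_mor_def morC_def)
  have "h p = h (aadd (prod_alg X) (a, azero X) (azero X, b))"
    using p ab by (simp add: X.add_zero X.zero_add)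
  also have "\<dots> = aadd Z (h (a, azero X)) (h (swap_act Z1 (b, azero X)))"
    using alg_hom_add[OF hom, of "(a, azero X)" "(azero X, b)"] ab X.zero_closed by simp
  also have "h (swap_act Z1 (b, azero X)) = \<gamma> Z1 (h (b, azero X))"
    using h ab X.zero_closed unfolding global_mor_def by (metis SigmaI prod_alg_simps(1))
  finally show ?thesis
    using h_inl p ab unfolding twisted_sum_def by simp
qed

end

lemma globalization_of_swap_restriction_disjoint:
  assumes R: "is_restriction \<alpha> X (prod_alg X) swap_act (\<lambda>x. (x, azero X))"
    and G: "globalization z2_add Z0 \<alpha> X Z \<gamma> \<kappa>"
  shows "\<kappa> ` acar X \<inter> \<gamma> Z1 ` \<kappa> ` acar X \<subseteq> {azero Z}"
proof
  fix w
  assume "w \<in> \<kappa> ` acar X \<inter> \<gamma> Z1 ` \<kappa> ` acar X"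
  then obtain a b where ab: "a \<in> acar X" "b \<in> acar X" "\<gamma> Z1 (\<kappa> a) = \<kappa> b" and w: "w = \<kappa> b"
    by auto
  have RZ: "is_restriction \<alpha> X Z \<gamma> \<kappa>" and \<kappa>: "morC X Z \<kappa>"
    using G by (simp_all add: globalization_def monoC_def)
  have "swap_act Z1 (a, azero X) = (b, azero X)"
    using is_restriction_graph[OF RZ, of Z1] is_restriction_graph[OF R, of Z1] ab by blast
  then have "b = azero X"
    by simp
  then show "w \<in> {azero Z}"
    using w \<kappa> alg_hom_zero[of X Z \<kappa>] by (simp add: morC_def)
qed

lemma universal_globalization_swap_act:
  fixes X :: "('k::field, 'x) kalg"
  assumes X: "kalg X" and R: "is_restriction \<alpha> X (prod_alg X) swap_act (\<lambda>x. (x, azero X))"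
  shows "universal_globalization TYPE('z) z2_add Z0 \<alpha> X (prod_alg X) swap_act (\<lambda>x. (x, azero X))"
  unfolding universal_globalization_def
proof (intro conjI allI impI)
  show "globalization z2_add Z0 \<alpha> X (prod_alg X) swap_act (\<lambda>x. (x, azero X))"
    using global_action_swap_act[OF X] monoC_inl[OF X] R by (simp add: globalization_def)
next
  fix Z :: "('k, 'z) kalg" and \<gamma> \<kappa>
  assume G: "globalization z2_add Z0 \<alpha> X Z \<gamma> \<kappa>"
  have "swap_extension X Z \<gamma> \<kappa>"
    using X G globalization_of_swap_restriction_disjoint[OF R G]
    unfolding swap_extension_def globalization_def monoC_def by blast
  then interpret swap_extension X Z \<gamma> \<kappa> .
  show "\<exists>\<kappa>'. global_mor (prod_alg X) swap_act Z \<gamma> \<kappa>' \<and> (\<forall>x\<in>acar X. \<kappa>' (x, azero X) = \<kappa> x) \<and>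
      (\<forall>\<kappa>''. global_mor (prod_alg X) swap_act Z \<gamma> \<kappa>'' \<and> (\<forall>x\<in>acar X. \<kappa>'' (x, azero X) = \<kappa> x) \<longrightarrow>
        (\<forall>y\<in>acar (prod_alg X). \<kappa>'' y = \<kappa>' y))"
  proof (rule exI[of _ twisted_sum], intro conjI allI impI ballI)
    show "global_mor (prod_alg X) swap_act Z \<gamma> twisted_sum"
      by (rule twisted_sum_global_mor)
  next
    show "twisted_sum (x, azero X) = \<kappa> x" if "x \<in> acar X" for x
      using that by (rule twisted_sum_inl)
  next
    fix h y
    assume "global_mor (prod_alg X) swap_act Z \<gamma> h \<and> (\<forall>x\<in>acar X. h (x, azero X) = \<kappa> x)"
      and "y \<in> acar (prod_alg X)"
    then show "h y = twisted_sum y"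
      using global_mor_eq_twisted_sum by simp
  qed
qed

lemma global_mor_swap_act_disjoint:
  assumes X: "kalg X" and Y: "kalg Y" and r: "alg_hom X Y r"
    and g: "global_mor Y \<beta> (prod_alg X) swap_act g" and g_r: "\<forall>x\<in>acar X. g (r x) = (x, azero X)"
  shows "r ` acar X \<inter> \<beta> Z1 ` r ` acar X \<subseteq> {azero Y}"
proof
  fix w
  assume "w \<in> r ` acar X \<inter> \<beta> Z1 ` r ` acar X"
  then obtain a b where ab: "a \<in> acar X" "b \<in> acar X" "w = r a" "w = \<beta> Z1 (r b)"
    by auto
  have "(a, azero X) = g w"
    using g_r ab by simp
  also have "\<dots> = g (\<beta> Z1 (r b))"
    using ab by simp
  also have "\<dots> = swap_act Z1 (g (r b))"
    using g ab(2) alg_hom_closed[OF r] unfolding global_mor_def by blast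
  also have "\<dots> = (azero X, b)"
    using g_r ab by simp
  finally have "a = azero X"
    by simp
  then show "w \<in> {azero Y}"
    using ab alg_hom_zero[OF X Y r] by simp
qed

lemma not_is_reflection_swap_restriction:
  fixes X :: "('k::field, 'x) kalg" and Y :: "('k, 'y) kalg"
  assumes X: "kalg X" and "unital X" and "nonzero X"
    and R: "is_restriction \<alpha> X (prod_alg X) swap_act (\<lambda>x. (x, azero X))"
  shows "\<not> is_reflection TYPE('x \<times> 'x) z2_add Z0 \<alpha> X Y \<beta> r"
proof
  assume refl: "is_reflection TYPE('x \<times> 'x) z2_add Z0 \<alpha> X Y \<beta> r"
  let ?\<iota> = "\<lambda>x. (x, azero X)"
  interpret X: kalgebra X by (rule kalgebra.intro) fact
  have \<beta>: "global_action z2_add Z0 Y \<beta>" and r: "morC X Y r"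
    using refl by (simp_all add: is_reflection_def datum_mor_def)
  have \<beta>_hom: "alg_hom Y Y (\<beta> Z1)" and r_hom: "alg_hom X Y r" and Y: "kalg Y"
    and r_ideal: "alg_ideal Y (r ` acar X)"
    using \<beta> r by (simp_all add: global_action_def morC_def)
  have factor: "\<exists>f. global_mor Y \<beta> (prod_alg X) \<gamma> f \<and> (\<forall>x\<in>acar X. f (r x) = ?\<iota> x)"
    if "global_action z2_add Z0 (prod_alg X) \<gamma>" and "datum_mor \<alpha> X (prod_alg X) \<gamma> ?\<iota>" for \<gamma>
    using refl that unfolding is_reflection_def by blast
  obtain g where g: "global_mor Y \<beta> (prod_alg X) swap_act g" "\<forall>x\<in>acar X. g (r x) = ?\<iota> x"
    using factor[OF global_action_swap_act[OF X] is_restriction_datum_mor[OF R]] by blast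
  obtain h where h: "global_mor Y \<beta> (prod_alg X) (\<lambda>m. id) h" "\<forall>x\<in>acar X. h (r x) = ?\<iota> x"
    using factor[OF global_action_trivial[OF kalg_prod_alg[OF X]] datum_mor_trivial_inl[OF X R]]
    by blast
  have disjoint: "r ` acar X \<inter> \<beta> Z1 ` r ` acar X \<subseteq> {azero Y}"
    using X Y r_hom g by (rule global_mor_swap_act_disjoint)
  obtain u where u: "u \<in> acar X" "\<And>x. x \<in> acar X \<Longrightarrow> amul X x u = x"
    using \<open>unital X\<close> unfolding unital_def by blast
  obtain x where x: "x \<in> acar X" "x \<noteq> azero X"
    using \<open>nonzero X\<close> X.zero_closed unfolding nonzero_def by blast
  have rx: "r x \<in> acar Y" and ru: "r u \<in> acar Y"
    using alg_hom_closed[OF r_hom] x u by simp_all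
  have h_hom: "alg_hom Y (prod_alg X) h"
    using h(1) by (simp add: global_mor_def morC_def)
  have "amul Y (r x) (\<beta> Z1 (r u)) = azero Y"
    using mul_involution_image_eq_zero[OF r_ideal \<beta>_hom global_action_Z1_involution[OF \<beta>] disjoint]
      x u by blast
  then have "h (amul Y (r x) (\<beta> Z1 (r u))) = (azero X, azero X)"
    using alg_hom_zero[OF Y kalg_prod_alg[OF X] h_hom] by simp
  moreover have "h (amul Y (r x) (\<beta> Z1 (r u))) = amul (prod_alg X) (h (r x)) (h (r u))"
    using h(1) alg_hom_mul[OF h_hom] rx ru alg_hom_closed[OF \<beta>_hom]
    by (simp add: global_mor_def)
  ultimately show False
    using h(2) x u by simp
qed

theorem mainTheorem19:
  fixes X :: "('k::field, 'x) kalg"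
    and \<alpha> :: "('k, 'd, 'x, z2) datum"
  assumes "kalg X" and "unital X" and "nonzero X"
    and "is_restriction \<alpha> X (prod_alg X) swap_act (\<lambda>x. (x, azero X))"
  shows "universal_globalization TYPE('z) z2_add Z0 \<alpha> X (prod_alg X) swap_act (\<lambda>x. (x, azero X))
    \<and> \<not> is_reflection TYPE('x \<times> 'x) z2_add Z0 \<alpha> X (prod_alg X) swap_act (\<lambda>x. (x, azero X))
    \<and> (\<forall>(Y :: ('k, 'y) kalg) \<beta>' r. \<not> is_reflection TYPE('x \<times> 'x) z2_add Z0 \<alpha> X Y \<beta>' r)"
proof (intro conjI allI)
  show "universal_globalization TYPE('z) z2_add Z0 \<alpha> X (prod_alg X) swap_act (\<lambda>x. (x, azero X))"
    using assms(1,4) by (rule universal_globalization_swap_act)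
  show "\<not> is_reflection TYPE('x \<times> 'x) z2_add Z0 \<alpha> X (prod_alg X) swap_act (\<lambda>x. (x, azero X))"
    using assms by (rule not_is_reflection_swap_restriction)
  show "\<not> is_reflection TYPE('x \<times> 'x) z2_add Z0 \<alpha> X Y \<beta>' r" for Y :: "('k, 'y) kalg" and \<beta>' r
    using assms by (rule not_is_reflection_swap_restriction)
qed

end
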